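(* For all positive integers $a,b$ and every integer $k$ with $1\le k\le\min(a,b)$, there exist positions of the parallel chip-firing game on $K_{a,b}$ with period exactly $k$ and positions with period exactly $2k$.
   Context: Parallel chip-firing game: a position $\sigma$ assigns a nonnegative integer to each vertex; in each step every vertex $v$ with $\sigma(v)\ge\deg(v)$ simultaneously sends one chip to each neighbor. $K_{a,b}$ is the complete bipartite graph with sides of sizes $a$ and $b$. The period $p(\sigma)$ is the least positive integer $p$ such that $U^{t+p}\sigma=U^t\sigma$ for all sufficiently large $t$, where $U$ is the step operator. *)

theory Defs
  imports Main
begin

definition Kab_vertices :: "nat \<Rightarrow> nat \<Rightarrow> (bool \<times> nat) set" where
  "Kab_vertices a b = {(False, i) | i. i < a} \<union> {(True, j) | j. j < b}"

definition Kab_adj :: "nat \<Rightarrow> nat \<Rightarrow> bool \<times> nat \<Rightarrow> bool \<times> nat \<Rightarrow> bool" where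
  "Kab_adj a b u v \<longleftrightarrow> u \<in> Kab_vertices a b \<and> v \<in> Kab_vertices a b \<and> fst u \<noteq> fst v"

definition Kab_deg :: "nat \<Rightarrow> nat \<Rightarrow> bool \<times> nat \<Rightarrow> nat" where
  "Kab_deg a b v = card {u. Kab_adj a b v u}"

definition is_position :: "nat \<Rightarrow> nat \<Rightarrow> (bool \<times> nat \<Rightarrow> nat) \<Rightarrow> bool" where
  "is_position a b \<sigma> \<longleftrightarrow> (\<forall>v. v \<notin> Kab_vertices a b \<longrightarrow> \<sigma> v = 0)"

definition fires :: "nat \<Rightarrow> nat \<Rightarrow> (bool \<times> nat \<Rightarrow> nat) \<Rightarrow> bool \<times> nat \<Rightarrow> bool" where
  "fires a b \<sigma> v \<longleftrightarrow> v \<in> Kab_vertices a b \<and> \<sigma> v \<ge> Kab_deg a b v"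

definition step :: "nat \<Rightarrow> nat \<Rightarrow> (bool \<times> nat \<Rightarrow> nat) \<Rightarrow> (bool \<times> nat \<Rightarrow> nat)" where
  "step a b \<sigma> = (\<lambda>v. \<sigma> v - (if fires a b \<sigma> v then Kab_deg a b v else 0)
                       + card {u. Kab_adj a b v u \<and> fires a b \<sigma> u})"

definition eventually_periodic_with :: "nat \<Rightarrow> nat \<Rightarrow> (bool \<times> nat \<Rightarrow> nat) \<Rightarrow> nat \<Rightarrow> bool" where
  "eventually_periodic_with a b \<sigma> p \<longleftrightarrow>
     (\<exists>T. \<forall>t\<ge>T. (step a b ^^ (t + p)) \<sigma> = (step a b ^^ t) \<sigma>)"

definition period :: "nat \<Rightarrow> nat \<Rightarrow> (bool \<times> nat \<Rightarrow> nat) \<Rightarrow> nat" where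
  "period a b \<sigma> = (LEAST p. p > 0 \<and> eventually_periodic_with a b \<sigma> p)"

end

theory Submission
  imports Defs
begin

(* Fix a period P > 0 and a phase function delta on the vertices of K_{a,b};
   vertex v carries a clock that reads (t + delta v) mod P at time t.  The phase position at
   time t puts deg v chips on every vertex whose clock reads 0 and, on every other vertex v,
   one chip for each neighbour whose clock lies in 1..clock v.  If every vertex has a
   neighbour whose phase is one ahead of its own (mod P), then exactly the vertices with
   clock 0 fire, and one step of the game turns the phase position at time t into the one at
   time t+1.  Hence the game started there is the phase position at time t after t steps; it
   is periodic with period P, and no smaller positive period exists because the firing times
   of a vertex with phase 0 are exactly the multiples of P.
   The theorem follows by exhibiting such phase functions on K_{a,b} for P = k (phases
   0..k-1 on both sides) and for P = 2k (even phases on one side, odd ones on the other). *)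

lemma finite_Kab_vertices: "finite (Kab_vertices a b)"
proof -
  have "Kab_vertices a b \<subseteq> UNIV \<times> {..<a+b}" unfolding Kab_vertices_def by auto
  then show ?thesis by (rule finite_subset) simp
qed

lemma finite_neighbours: "finite {u. Kab_adj a b v u \<and> Q u}"
  by (rule finite_subset[OF _ finite_Kab_vertices[of a b]]) (auto simp: Kab_adj_def)

definition clock :: "nat \<Rightarrow> (bool \<times> nat \<Rightarrow> nat) \<Rightarrow> nat \<Rightarrow> bool \<times> nat \<Rightarrow> nat" where
  "clock P \<delta> t v = (t + \<delta> v) mod P"

definition phase_position ::
    "nat \<Rightarrow> nat \<Rightarrow> nat \<Rightarrow> (bool \<times> nat \<Rightarrow> nat) \<Rightarrow> nat \<Rightarrow> bool \<times> nat \<Rightarrow> nat" where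
  "phase_position a b P \<delta> t v =
     (if v \<notin> Kab_vertices a b then 0
      else if clock P \<delta> t v = 0 then card {u. Kab_adj a b v u}
      else card {u. Kab_adj a b v u \<and> 0 < clock P \<delta> t u \<and> clock P \<delta> t u \<le> clock P \<delta> t v})"

definition phase_successors :: "nat \<Rightarrow> nat \<Rightarrow> nat \<Rightarrow> (bool \<times> nat \<Rightarrow> nat) \<Rightarrow> bool" where
  "phase_successors a b P \<delta> \<longleftrightarrow>
     (\<forall>v\<in>Kab_vertices a b. \<exists>u. Kab_adj a b v u \<and> \<delta> u mod P = Suc (\<delta> v) mod P)"

lemma clock_less: "P > 0 \<Longrightarrow> clock P \<delta> t v < P"
  by (simp add: clock_def)

lemma clock_Suc:
  "clock P \<delta> (Suc t) v = (if Suc (clock P \<delta> t v) = P then 0 else Suc (clock P \<delta> t v))"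
  unfolding clock_def by (simp add: mod_Suc)

lemma clock_shift: "clock P \<delta> (n * P + t) v = clock P \<delta> t v"
  by (simp add: clock_def add.assoc)

lemma clock_successor:
  assumes "\<delta> u mod P = Suc (\<delta> v) mod P"
  shows "clock P \<delta> t u = clock P \<delta> (Suc t) v"
proof -
  have "clock P \<delta> t u = (t + \<delta> u mod P) mod P" by (simp add: clock_def mod_add_right_eq)
  also have "\<dots> = Suc (t + \<delta> v) mod P" by (simp add: assms mod_add_right_eq)
  finally show ?thesis by (simp add: clock_def)
qed

(* In a phase position the firing vertices are exactly those whose clock reads 0:
   a vertex with nonzero clock misses at least the chip of its successor neighbour. *)
lemma fires_phase_position:
  assumes "phase_successors a b P \<delta>"
  shows "fires a b (phase_position a b P \<delta> t) v \<longleftrightarrow> v \<in> Kab_vertices a b \<and> clock P \<delta> t v = 0"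
proof (cases "v \<in> Kab_vertices a b \<and> clock P \<delta> t v \<noteq> 0")
  case False
  then show ?thesis by (auto simp: fires_def phase_position_def Kab_deg_def)
next
  case True
  then obtain u where u: "Kab_adj a b v u" "\<delta> u mod P = Suc (\<delta> v) mod P"
    using assms by (auto simp: phase_successors_def)
  let ?S = "{u. Kab_adj a b v u \<and> 0 < clock P \<delta> t u \<and> clock P \<delta> t u \<le> clock P \<delta> t v}"
  have "u \<notin> ?S" using clock_successor[OF u(2), of t] by (auto simp: clock_Suc)
  then have "?S \<subset> {u. Kab_adj a b v u}" using u(1) by blast
  then have "card ?S < card {u. Kab_adj a b v u}"
    by (rule psubset_card_mono[OF finite_neighbours[where Q = "\<lambda>_. True", simplified]])
  then show ?thesis using True by (simp add: fires_def phase_position_def Kab_deg_def)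
qed

(* After one step every vertex holds one chip per neighbour whose clock is not ahead of its own:
   a firing vertex keeps only the chips of its co-firing neighbours, and a waiting vertex adds
   the chips of the firing neighbours (clock 0) to those it already holds. *)
lemma step_phase_position_count:
  assumes "phase_successors a b P \<delta>" and "v \<in> Kab_vertices a b"
  shows "step a b (phase_position a b P \<delta> t) v
           = card {u. Kab_adj a b v u \<and> clock P \<delta> t u \<le> clock P \<delta> t v}"
proof -
  let ?c = "clock P \<delta> t"
  have received: "card {u. Kab_adj a b v u \<and> fires a b (phase_position a b P \<delta> t) u}
                    = card {u. Kab_adj a b v u \<and> ?c u = 0}"
    using fires_phase_position[OF assms(1)] by (metis (no_types, lifting) Kab_adj_def)
  show ?thesis
  proof (cases "?c v = 0")
    case True
    then show ?thesis using assms received fires_phase_position[OF assms(1)]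
      by (simp add: step_def phase_position_def Kab_deg_def)
  next
    case False
    have "step a b (phase_position a b P \<delta> t) v
            = card {u. Kab_adj a b v u \<and> 0 < ?c u \<and> ?c u \<le> ?c v}
              + card {u. Kab_adj a b v u \<and> ?c u = 0}"
      using assms False received fires_phase_position[OF assms(1)]
      by (simp add: step_def phase_position_def)
    also have "\<dots> = card ({u. Kab_adj a b v u \<and> 0 < ?c u \<and> ?c u \<le> ?c v}
                         \<union> {u. Kab_adj a b v u \<and> ?c u = 0})"
      by (rule card_Un_disjoint[symmetric]) (auto intro: finite_neighbours)
    also have "({u. Kab_adj a b v u \<and> 0 < ?c u \<and> ?c u \<le> ?c v} \<union> {u. Kab_adj a b v u \<and> ?c u = 0})
                 = {u. Kab_adj a b v u \<and> ?c u \<le> ?c v}"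
      by auto
    finally show ?thesis .
  qed
qed

(* The same count describes the phase position one tick later: if the clock of v wraps to 0,
   every neighbour is counted; otherwise the clock of v and of every neighbour not ahead of it
   advances by one. *)
lemma phase_position_Suc_count:
  assumes "P > 0" and "v \<in> Kab_vertices a b"
  shows "phase_position a b P \<delta> (Suc t) v
           = card {u. Kab_adj a b v u \<and> clock P \<delta> t u \<le> clock P \<delta> t v}"
proof -
  let ?c = "clock P \<delta> t"
  have bounded: "\<And>u. ?c u < P" using clock_less[OF assms(1)] .
  show ?thesis
  proof (cases "Suc (?c v) = P")
    case True
    then have "{u. Kab_adj a b v u \<and> ?c u \<le> ?c v} = {u. Kab_adj a b v u}"
      using bounded by (auto simp: less_Suc_eq_le[symmetric])
    then show ?thesis using assms True by (simp add: phase_position_def clock_Suc)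
  next
    case False
    then have no_wrap: "\<And>u. ?c u \<le> ?c v \<Longrightarrow> Suc (?c u) \<noteq> P"
      using bounded[of v] by linarith
    have "{u. Kab_adj a b v u \<and> 0 < clock P \<delta> (Suc t) u \<and> clock P \<delta> (Suc t) u \<le> Suc (?c v)}
            = {u. Kab_adj a b v u \<and> ?c u \<le> ?c v}"
      using False bounded no_wrap by (auto simp: clock_Suc split: if_splits)
    then show ?thesis using assms False by (simp add: phase_position_def clock_Suc)
  qed
qed

lemma step_phase_position:
  assumes "P > 0" and "phase_successors a b P \<delta>"
  shows "step a b (phase_position a b P \<delta> t) = phase_position a b P \<delta> (Suc t)"
proof
  fix v
  show "step a b (phase_position a b P \<delta> t) v = phase_position a b P \<delta> (Suc t) v"
  proof (cases "v \<in> Kab_vertices a b")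
    case True
    then show ?thesis
      by (simp add: step_phase_position_count[OF assms(2)] phase_position_Suc_count[OF assms(1)])
  next
    case False
    then have no_chips: "{u. Kab_adj a b v u \<and> fires a b (phase_position a b P \<delta> t) u} = {}"
      by (auto simp: Kab_adj_def)
    show ?thesis unfolding step_def no_chips using False by (simp add: phase_position_def)
  qed
qed

lemma iterate_phase_position:
  assumes "P > 0" and "phase_successors a b P \<delta>"
  shows "(step a b ^^ t) (phase_position a b P \<delta> 0) = phase_position a b P \<delta> t"
  by (induction t) (simp_all add: step_phase_position[OF assms])

lemma phase_position_shift: "phase_position a b P \<delta> (n * P + t) = phase_position a b P \<delta> t"
  unfolding phase_position_def clock_shift ..

(* The game started at a phase position has period exactly P, provided some vertex has
   phase 0: that vertex fires at time 0 but not at any time strictly between 0 and P. *)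
theorem period_phase_position:
  assumes "P > 0" and "phase_successors a b P \<delta>"
    and "w \<in> Kab_vertices a b" and "\<delta> w mod P = 0"
  shows "is_position a b (phase_position a b P \<delta> 0) \<and> period a b (phase_position a b P \<delta> 0) = P"
proof -
  let ?\<sigma> = "phase_position a b P \<delta>"
  have periodic: "eventually_periodic_with a b (?\<sigma> 0) P"
    unfolding eventually_periodic_with_def iterate_phase_position[OF assms(1,2)]
    using phase_position_shift[of a b P \<delta> 1] by (auto simp: add.commute)
  have not_periodic: "\<not> eventually_periodic_with a b (?\<sigma> 0) p" if p: "0 < p" "p < P" for p
  proof
    assume "eventually_periodic_with a b (?\<sigma> 0) p"
    then obtain T where T: "\<forall>t\<ge>T. ?\<sigma> (t + p) = ?\<sigma> t"
      unfolding eventually_periodic_with_def iterate_phase_position[OF assms(1,2)] by blast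
    have "T \<le> T * P" using assms(1) by simp
    then have "?\<sigma> (T * P + p) = ?\<sigma> (T * P + 0)" using T by simp
    then have same: "?\<sigma> p = ?\<sigma> 0" by (simp only: phase_position_shift)
    have "clock P \<delta> 0 w = 0" using assms(4) by (simp add: clock_def)
    moreover have "clock P \<delta> p w \<noteq> 0"
      using assms(4) p by (simp add: clock_def mod_add_right_eq[of p "\<delta> w" P, symmetric])
    ultimately show False
      using same fires_phase_position[OF assms(2), of _ w] assms(3) by metis
  qed
  have "period a b (?\<sigma> 0) = P"
    unfolding period_def
  proof (rule Least_equality)
    show "0 < P \<and> eventually_periodic_with a b (?\<sigma> 0) P" using assms(1) periodic by simp
  next
    fix p assume "0 < p \<and> eventually_periodic_with a b (?\<sigma> 0) p"
    then show "P \<le> p" using not_periodic by (meson not_le)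
  qed
  then show ?thesis by (simp add: is_position_def phase_position_def)
qed

(* Period k: vertex i on either side gets phase min i (k-1); the successor of phase c
   is found on the other side at index (c+1) mod k, which exists since k \<le> min a b. *)
definition phase_k :: "nat \<Rightarrow> bool \<times> nat \<Rightarrow> nat" where
  "phase_k k v = min (snd v) (k - 1)"

lemma phase_successors_k:
  assumes "1 \<le> k" and "k \<le> min a b"
  shows "phase_successors a b k (phase_k k)"
  unfolding phase_successors_def
proof
  fix v assume v: "v \<in> Kab_vertices a b"
  obtain s i where vi: "v = (s, i)" by fastforce
  define j where "j = Suc (min i (k - 1)) mod k"
  have "j < k" using assms(1) by (simp add: j_def)
  then have "Kab_adj a b v (\<not> s, j)" and "phase_k k (\<not> s, j) mod k = Suc (phase_k k v) mod k"
    using v vi assms(2) by (auto simp: Kab_adj_def Kab_vertices_def phase_k_def j_def)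
  then show "\<exists>u. Kab_adj a b v u \<and> phase_k k u mod k = Suc (phase_k k v) mod k" by blast
qed

(* Period 2k: vertex i gets phase 2 min i (k-1) on the False side and one more on the
   True side, so the phases run around the cycle (False,0),(True,0),(False,1),...,(True,k-1). *)
definition phase_2k :: "nat \<Rightarrow> bool \<times> nat \<Rightarrow> nat" where
  "phase_2k k v = 2 * min (snd v) (k - 1) + (if fst v then 1 else 0)"

lemma phase_successors_2k:
  assumes "1 \<le> k" and "k \<le> min a b"
  shows "phase_successors a b (2 * k) (phase_2k k)"
  unfolding phase_successors_def
proof
  fix v assume v: "v \<in> Kab_vertices a b"
  obtain s i where vi: "v = (s, i)" by fastforce
  define c where "c = min i (k - 1)"
  have ck: "c < k" using assms(1) by (simp add: c_def)
  let ?succ = "\<lambda>u. Kab_adj a b v u \<and> phase_2k k u mod (2 * k) = Suc (phase_2k k v) mod (2 * k)"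
  consider (even) "\<not> s" | (odd) "s" "c + 1 < k" | (wrap) "s" "c = k - 1"
    using ck by linarith
  then show "\<exists>u. ?succ u"
  proof cases
    case even
    then have "?succ (True, c)"
      using v vi ck assms(2) by (auto simp: Kab_adj_def Kab_vertices_def phase_2k_def c_def)
    then show ?thesis by blast
  next
    case odd
    then have "?succ (False, c + 1)"
      using v vi assms(2) by (auto simp: Kab_adj_def Kab_vertices_def phase_2k_def c_def)
    then show ?thesis by blast
  next
    case wrap
    then have "Suc (phase_2k k v) = 2 * k" using assms(1) by (simp add: phase_2k_def vi c_def)
    then have "phase_2k k (False, 0) mod (2 * k) = Suc (phase_2k k v) mod (2 * k)"
      by (simp add: phase_2k_def)
    moreover have "Kab_adj a b v (False, 0)"
      using v vi wrap assms by (auto simp: Kab_adj_def Kab_vertices_def)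
    ultimately have "?succ (False, 0)" by blast
    then show ?thesis by blast
  qed
qed

theorem proposition3p7:
  fixes a b k :: nat
  assumes "a \<ge> 1" and "b \<ge> 1" and "1 \<le> k" and "k \<le> min a b"
  shows "(\<exists>\<sigma>. is_position a b \<sigma> \<and> period a b \<sigma> = k)
       \<and> (\<exists>\<sigma>. is_position a b \<sigma> \<and> period a b \<sigma> = 2 * k)"
proof -
  have w: "(False, 0) \<in> Kab_vertices a b" using assms(1) by (simp add: Kab_vertices_def)
  have "is_position a b (phase_position a b k (phase_k k) 0)
        \<and> period a b (phase_position a b k (phase_k k) 0) = k"
    using period_phase_position[OF _ phase_successors_k[OF assms(3,4)] w] assms(3)
    by (simp add: phase_k_def)
  moreover have "is_position a b (phase_position a b (2 * k) (phase_2k k) 0)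
        \<and> period a b (phase_position a b (2 * k) (phase_2k k) 0) = 2 * k"
    using period_phase_position[OF _ phase_successors_2k[OF assms(3,4)] w] assms(3)
    by (simp add: phase_2k_def)
  ultimately show ?thesis by blast
qed

end
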